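(* Let $L\subseteq\mathbb{C}^n$ be a linear subspace and $m\ge1$, and let $L(m)\subseteq(\mathbb{C}^n)^m=\mathbb{C}^{[m]\times[n]}$ be its $m$-thickening. Then the linear map \[ \gamma:(R_{L(m)})_1\to(R_L)_m,\qquad \gamma(z_S)=\prod_{i=1}^m z_{S_{i,*}}\quad(S\subseteq[m]\times[n]), \] is well defined and surjective.
   Context: The $m$-thickening $L(m)$ is the image of $L$ under the diagonal embedding $\mathbb{C}^n\hookrightarrow(\mathbb{C}^n)^m$; its coordinates are indexed by $[m]\times[n]$. For $S\subseteq[m]\times[n]$, $S_{i,*}=\{j:(i,j)\in S\}$. For a linear subspace $L'\subseteq\mathbb{C}^N$ with matroid $M'$ (bases: $\dim L'$-subsets $B$ with $L'\to\mathbb{C}^B$ an isomorphism), fix a matrix with row space $L'$ and columns $A_i$; for each circuit $C$ fix the dependence $\sum_{i\in C}\alpha_{C,i}A_i=0$; for $A'\subseteq[N]\setminus C$ let $f_C^{A'}(z)=\sum_{i\in C}\alpha_{C,i}z_{A'\cup\{i\}}$. Then $I_{L'}^{\mathrm{SE}}$ is the ideal of $\mathbb{C}[z_S:S\subseteq[N]]$ generated by all $z_Sz_T-z_{S\cup T}z_{S\cap T}$ and all $f_C^{A'}$, and $R_{L'}=\mathbb{C}[z_S:S\subseteq[N]]/I_{L'}^{\mathrm{SE}}$, graded by polynomial degree in the $z$'s; $(R_{L'})_k$ denotes its degree-$k$ part. *)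

theory Defs
  imports Complex_Main "HOL-Library.Poly_Mapping"
begin

text \<open>Polynomials over the complex numbers in variables z_S indexed by sets S of
  coordinates: a polynomial is a finitely supported map from monomials
  (finitely supported exponent maps on variables) to coefficients.\<close>

type_synonym 'e zpoly = "('e set \<Rightarrow>\<^sub>0 nat) \<Rightarrow>\<^sub>0 complex"

definition zvar :: "'e set \<Rightarrow> 'e zpoly" where
  "zvar S = Poly_Mapping.single (Poly_Mapping.single S 1) 1"

definition pvars :: "'e set \<Rightarrow> 'e zpoly set" where
  "pvars E = {p. \<forall>\<mu>\<in>Poly_Mapping.keys p. \<forall>S\<in>Poly_Mapping.keys \<mu>. S \<subseteq> E}"

definition hom_polys :: "'e set \<Rightarrow> nat \<Rightarrow> 'e zpoly set" where
  "hom_polys E k = {p \<in> pvars E. \<forall>\<mu>\<in>Poly_Mapping.keys p. (\<Sum>S\<in>Poly_Mapping.keys \<mu>. Poly_Mapping.lookup \<mu> S) = k}"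

definition gen_ideal :: "'e set \<Rightarrow> 'e zpoly set \<Rightarrow> 'e zpoly set" where
  "gen_ideal E G = {p. \<exists>F c. finite F \<and> F \<subseteq> G \<and> (\<forall>g\<in>F. c g \<in> pvars E)
                        \<and> p = (\<Sum>g\<in>F. c g * g)}"

definition is_csubspace :: "'e set \<Rightarrow> ('e \<Rightarrow> complex) set \<Rightarrow> bool" where
  "is_csubspace E L \<longleftrightarrow> (\<forall>x\<in>L. \<forall>i. i \<notin> E \<longrightarrow> x i = 0) \<and> (\<lambda>_. 0) \<in> L \<and>
     (\<forall>x\<in>L. \<forall>y\<in>L. (\<lambda>i. x i + y i) \<in> L) \<and> (\<forall>c. \<forall>x\<in>L. (\<lambda>i. c * x i) \<in> L)"

text \<open>alpha (restricted to D) is a linear dependence among the columns A_i (i in D) of a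
  matrix whose row space is L: sum_{i in D} alpha_i A_i = 0 iff the row vector
  alpha annihilates every row, i.e. every element of L.\<close>
definition col_dep :: "('e \<Rightarrow> complex) set \<Rightarrow> 'e set \<Rightarrow> ('e \<Rightarrow> complex) \<Rightarrow> bool" where
  "col_dep L D \<alpha> \<longleftrightarrow> (\<exists>i\<in>D. \<alpha> i \<noteq> 0) \<and> (\<forall>x\<in>L. (\<Sum>i\<in>D. \<alpha> i * x i) = 0)"

definition is_circuit :: "'e set \<Rightarrow> ('e \<Rightarrow> complex) set \<Rightarrow> 'e set \<Rightarrow> bool" where
  "is_circuit E L C \<longleftrightarrow> C \<subseteq> E \<and> (\<exists>\<alpha>. col_dep L C \<alpha>) \<and>
     (\<forall>D. D \<subset> C \<longrightarrow> \<not> (\<exists>\<alpha>. col_dep L D \<alpha>))"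

definition f_circ :: "'e set \<Rightarrow> ('e \<Rightarrow> complex) \<Rightarrow> 'e set \<Rightarrow> 'e zpoly" where
  "f_circ C \<alpha> A' = (\<Sum>i\<in>C. Poly_Mapping.single 0 (\<alpha> i) * zvar (insert i A'))"

definition SE_gens :: "'e set \<Rightarrow> ('e \<Rightarrow> complex) set \<Rightarrow> 'e zpoly set" where
  "SE_gens E L =
     {zvar S * zvar T - zvar (S \<union> T) * zvar (S \<inter> T) | S T. S \<subseteq> E \<and> T \<subseteq> E}
   \<union> {f_circ C \<alpha> A' | C \<alpha> A'. is_circuit E L C \<and> col_dep L C \<alpha> \<and> A' \<subseteq> E - C}"

definition SE_ideal :: "'e set \<Rightarrow> ('e \<Rightarrow> complex) set \<Rightarrow> 'e zpoly set" where
  "SE_ideal E L = gen_ideal E (SE_gens E L)"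

definition thick_ground :: "nat \<Rightarrow> nat \<Rightarrow> (nat \<times> nat) set" where
  "thick_ground m n = {0..<m} \<times> {0..<n}"

text \<open>The m-thickening L(m): image of L under the diagonal embedding.\<close>
definition thicken :: "nat \<Rightarrow> nat \<Rightarrow> (nat \<Rightarrow> complex) set \<Rightarrow> (nat \<times> nat \<Rightarrow> complex) set" where
  "thicken m n L = {(\<lambda>(i,j). if i < m \<and> j < n then x j else 0) | x. x \<in> L}"

definition row_of :: "(nat \<times> nat) set \<Rightarrow> nat \<Rightarrow> nat set" where
  "row_of S i = {j. (i, j) \<in> S}"

definition gamma :: "nat \<Rightarrow> (nat \<times> nat) zpoly \<Rightarrow> nat zpoly" where
  "gamma m q = (\<Sum>S\<in>{S. Poly_Mapping.single S 1 \<in> Poly_Mapping.keys q}.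
      Poly_Mapping.single 0 (Poly_Mapping.lookup q (Poly_Mapping.single S 1)) * (\<Prod>i<m. zvar (row_of S i)))"

end

theory Submission
  imports Defs
begin

(*
  gamma reads off only the coefficients of the linear monomials z_S. Every generator g of
  I^SE_{L(m)} has zero constant term, so gamma (c g) = c(0) gamma g, and the binomials, having
  no linear part, are killed. For a linear generator f_C^{A'} write B_0, ..., B_{m-1} for the
  rows of A'. Modulo the binomials, z_{B_0} ... z_{B_{m-1}} with one row enlarged by an
  element j straightens to G z_{W + j}, where W is the intersection of the rows and the
  cofactor G does not depend on the row receiving j. Hence gamma f_C^{A'} is congruent to
  G times the sum of alpha_c z_{W + snd c} over c in C. A circuit of L(m) either projects
  bijectively onto a circuit of L, and then this sum is the generator f_{snd C}^W of I^SE_L,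
  or it consists of two copies of one coordinate with opposite coefficients, and then the
  sum vanishes. Surjectivity holds on the nose: z_{B_1} ... z_{B_m} is the image of z_S for
  the set S whose rows are B_1, ..., B_m.
*)

(* Keeps the linear monomials single S 1 from being rewritten to single S (Suc 0). *)
declare One_nat_def [simp del]

section \<open>Constant and linear coefficients of products\<close>

lemma poly_mapping_eq_single_lookup:
  assumes "\<And>T. T \<noteq> U \<Longrightarrow> Poly_Mapping.lookup f T = 0"
  shows "f = Poly_Mapping.single U (Poly_Mapping.lookup f U)"
proof (rule poly_mapping_eqI)
  fix T
  show "Poly_Mapping.lookup f T = Poly_Mapping.lookup (Poly_Mapping.single U (Poly_Mapping.lookup f U)) T"
    using assms[of T] by (cases "T = U") (simp_all add: lookup_single)
qed

lemma single_one_eq_add_iff: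
  fixes a b :: "'a \<Rightarrow>\<^sub>0 nat"
  shows "Poly_Mapping.single U 1 = a + b \<longleftrightarrow>
    (a = 0 \<and> b = Poly_Mapping.single U 1) \<or> (a = Poly_Mapping.single U 1 \<and> b = 0)"
proof
  assume sum: "Poly_Mapping.single U 1 = a + b"
  have lk: "Poly_Mapping.lookup a T + Poly_Mapping.lookup b T = (1 when U = T)" for T
    using arg_cong[OF sum, of "\<lambda>f. Poly_Mapping.lookup f T"] by (simp add: lookup_add lookup_single)
  have off: "Poly_Mapping.lookup a T = 0 \<and> Poly_Mapping.lookup b T = 0" if "T \<noteq> U" for T
    using lk[of T] that by simp
  have a: "a = Poly_Mapping.single U (Poly_Mapping.lookup a U)"
    and b: "b = Poly_Mapping.single U (Poly_Mapping.lookup b U)"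
    using off by (auto intro!: poly_mapping_eq_single_lookup)
  have "Poly_Mapping.lookup a U + Poly_Mapping.lookup b U = 1"
    using lk[of U] by simp
  then consider "Poly_Mapping.lookup a U = 0" "Poly_Mapping.lookup b U = 1"
    | "Poly_Mapping.lookup a U = 1" "Poly_Mapping.lookup b U = 0"
    by linarith
  then show "(a = 0 \<and> b = Poly_Mapping.single U 1) \<or> (a = Poly_Mapping.single U 1 \<and> b = 0)"
    by cases (use a b in \<open>simp_all only: single_zero simp_thms\<close>)
qed auto

lemma single_one_eq_single_one_iff [simp]:
  "Poly_Mapping.single S (1::nat) = Poly_Mapping.single T 1 \<longleftrightarrow> S = T"
proof
  assume "Poly_Mapping.single S (1::nat) = Poly_Mapping.single T 1"
  then have "Poly_Mapping.lookup (Poly_Mapping.single S (1::nat)) T = 1"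
    by simp
  then show "S = T"
    by (simp add: lookup_single when_def split: if_splits)
qed simp

lemma single_one_neq_zero: "Poly_Mapping.single U (1::nat) \<noteq> 0"
  by (metis lookup_single_eq lookup_zero zero_neq_one)

lemma zero_eq_add_iff:
  fixes a b :: "'a \<Rightarrow>\<^sub>0 nat"
  shows "0 = a + b \<longleftrightarrow> a = 0 \<and> b = 0"
proof
  assume sum: "0 = a + b"
  have "Poly_Mapping.lookup a T = 0 \<and> Poly_Mapping.lookup b T = 0" for T
    using arg_cong[OF sum, of "\<lambda>f. Poly_Mapping.lookup f T"] by (simp add: lookup_add)
  then show "a = 0 \<and> b = 0"
    by (auto intro: poly_mapping_eqI)
qed simp

lemma lookup_mult_zero:
  fixes c p :: "('a \<Rightarrow>\<^sub>0 nat) \<Rightarrow>\<^sub>0 'b::comm_semiring_1"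
  shows "Poly_Mapping.lookup (c * p) 0 = Poly_Mapping.lookup c 0 * Poly_Mapping.lookup p 0"
proof -
  have "(\<Sum>q. Poly_Mapping.lookup p q when 0 = l + q) = (Poly_Mapping.lookup p 0 when l = 0)" for l
    by (cases "l = 0") (simp_all add: zero_eq_add_iff)
  then show ?thesis
    unfolding lookup_mult by (simp add: mult_when)
qed

lemma lookup_mult_single_one:
  fixes c p :: "('a \<Rightarrow>\<^sub>0 nat) \<Rightarrow>\<^sub>0 'b::comm_semiring_1"
  shows "Poly_Mapping.lookup (c * p) (Poly_Mapping.single U 1) =
    Poly_Mapping.lookup c 0 * Poly_Mapping.lookup p (Poly_Mapping.single U 1)
    + Poly_Mapping.lookup c (Poly_Mapping.single U 1) * Poly_Mapping.lookup p 0"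
proof -
  let ?s = "Poly_Mapping.single U (1::nat)"
  let ?inner = "\<lambda>l. \<Sum>q. Poly_Mapping.lookup p q when ?s = l + q"
  have inner_0: "?inner 0 = Poly_Mapping.lookup p ?s"
    and inner_s: "?inner ?s = Poly_Mapping.lookup p 0"
    and inner_other: "l \<notin> {0, ?s} \<Longrightarrow> ?inner l = 0" for l
    using single_one_neq_zero[of U] by (simp_all add: single_one_eq_add_iff)
  have "(\<Sum>l. Poly_Mapping.lookup c l * ?inner l) = (\<Sum>l\<in>{0, ?s}. Poly_Mapping.lookup c l * ?inner l)"
    by (rule Sum_any.expand_superset) (simp, use inner_other in force)
  then show ?thesis
    unfolding lookup_mult using single_one_neq_zero[of U] by (simp add: inner_0 inner_s)
qed

definition lin_coeff :: "'e zpoly \<Rightarrow> 'e set \<Rightarrow> complex" where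
  "lin_coeff q S = Poly_Mapping.lookup q (Poly_Mapping.single S 1)"

lemma lin_coeff_mult:
  "lin_coeff (c * p) S = Poly_Mapping.lookup c 0 * lin_coeff p S + lin_coeff c S * Poly_Mapping.lookup p 0"
  unfolding lin_coeff_def by (rule lookup_mult_single_one)

lemma lin_coeff_add: "lin_coeff (p + q) S = lin_coeff p S + lin_coeff q S"
  unfolding lin_coeff_def by (simp add: lookup_add)

lemma lin_coeff_diff: "lin_coeff (p - q) S = lin_coeff p S - lin_coeff q S"
  unfolding lin_coeff_def by (simp add: lookup_minus)

lemma lin_coeff_zero: "lin_coeff 0 S = 0"
  unfolding lin_coeff_def by simp

lemma lin_coeff_const: "lin_coeff (Poly_Mapping.single 0 a) S = 0"
  unfolding lin_coeff_def by (metis lookup_single_not_eq lookup_single_eq lookup_zero zero_neq_one)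

lemma lin_coeff_zvar: "lin_coeff (zvar S) T = (if S = T then 1 else 0)"
  unfolding lin_coeff_def zvar_def by (simp add: lookup_single when_def)

lemma lookup_zvar_zero: "Poly_Mapping.lookup (zvar S) 0 = 0"
  unfolding zvar_def by (metis lookup_single_eq lookup_single_not_eq lookup_zero zero_neq_one)

lemma lin_coeff_zvar_mult_zvar: "lin_coeff (zvar S * zvar T) U = 0"
  by (simp add: lin_coeff_mult lookup_zvar_zero)

lemma SE_gens_lookup_zero:
  assumes "g \<in> SE_gens E L"
  shows "Poly_Mapping.lookup g 0 = 0"
  using assms unfolding SE_gens_def f_circ_def
  by (auto simp: lookup_minus lookup_sum lookup_mult_zero lookup_zvar_zero)

definition row_prod :: "nat \<Rightarrow> (nat \<times> nat) set \<Rightarrow> nat zpoly" where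
  "row_prod m S = (\<Prod>i<m. zvar (row_of S i))"

lemma finite_lin_coeff_support: "finite {S. lin_coeff q S \<noteq> 0}"
proof -
  have "{S. lin_coeff q S \<noteq> 0} = (\<lambda>S. Poly_Mapping.single S (1::nat)) -` Poly_Mapping.keys q"
    by (auto simp: lin_coeff_def in_keys_iff)
  moreover have "inj (\<lambda>S. Poly_Mapping.single S (1::nat))"
    by (rule injI) simp
  ultimately show ?thesis
    by (metis finite_keys finite_vimageI)
qed

lemma gamma_eq_sum:
  assumes "finite X" "{S. lin_coeff q S \<noteq> 0} \<subseteq> X"
  shows "gamma m q = (\<Sum>S\<in>X. Poly_Mapping.single 0 (lin_coeff q S) * row_prod m S)"
proof -
  have "{S. Poly_Mapping.single S 1 \<in> Poly_Mapping.keys q} = {S. lin_coeff q S \<noteq> 0}"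
    by (simp add: lin_coeff_def in_keys_iff)
  then have "gamma m q = (\<Sum>S | lin_coeff q S \<noteq> 0. Poly_Mapping.single 0 (lin_coeff q S) * row_prod m S)"
    unfolding gamma_def row_prod_def lin_coeff_def by simp
  also have "\<dots> = (\<Sum>S\<in>X. Poly_Mapping.single 0 (lin_coeff q S) * row_prod m S)"
    by (rule sum.mono_neutral_left) (use assms in auto)
  finally show ?thesis .
qed

lemma gamma_cong:
  assumes "\<And>S. lin_coeff p S = lin_coeff q S"
  shows "gamma m p = gamma m q"
  using gamma_eq_sum[OF finite_lin_coeff_support order_refl, where q = p and m = m]
    gamma_eq_sum[OF finite_lin_coeff_support order_refl, where q = q and m = m]
  by (simp add: assms)

lemma gamma_zero: "gamma m 0 = 0"
  unfolding gamma_def by simp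

lemma gamma_add: "gamma m (p + q) = gamma m p + gamma m q"
proof -
  let ?X = "{S. lin_coeff p S \<noteq> 0} \<union> {S. lin_coeff q S \<noteq> 0}"
  have "finite ?X"
    by (simp add: finite_lin_coeff_support)
  moreover have "{S. lin_coeff (p + q) S \<noteq> 0} \<subseteq> ?X"
    by (auto simp: lin_coeff_add)
  ultimately show ?thesis
    by (simp add: gamma_eq_sum[of ?X] lin_coeff_add single_add distrib_right sum.distrib)
qed

lemma gamma_sum: "gamma m (\<Sum>i\<in>I. f i) = (\<Sum>i\<in>I. gamma m (f i))"
  by (induction I rule: infinite_finite_induct) (simp_all add: gamma_zero gamma_add)

lemma gamma_smult:
  "gamma m (Poly_Mapping.single 0 a * p) = Poly_Mapping.single 0 a * gamma m p"
proof -
  have lin: "lin_coeff (Poly_Mapping.single 0 a * p) S = a * lin_coeff p S" for S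
    by (simp add: lin_coeff_mult lin_coeff_const)
  have "gamma m (Poly_Mapping.single 0 a * p) =
      (\<Sum>S | lin_coeff p S \<noteq> 0. Poly_Mapping.single 0 (a * lin_coeff p S) * row_prod m S)"
    by (subst gamma_eq_sum[OF finite_lin_coeff_support]) (auto simp: lin)
  also have "\<dots> = Poly_Mapping.single 0 a *
      (\<Sum>S | lin_coeff p S \<noteq> 0. Poly_Mapping.single 0 (lin_coeff p S) * row_prod m S)"
    by (simp add: sum_distrib_left mult_single flip: mult.assoc)
  also have "\<dots> = Poly_Mapping.single 0 a * gamma m p"
    by (simp add: gamma_eq_sum[OF finite_lin_coeff_support order_refl])
  finally show ?thesis .
qed

lemma gamma_zvar: "gamma m (zvar S) = row_prod m S"
proof -
  have "{T. lin_coeff (zvar S) T \<noteq> 0} = {S}"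
    by (auto simp: lin_coeff_zvar)
  then show ?thesis
    by (simp add: gamma_eq_sum[of "{S}"] lin_coeff_zvar)
qed

lemma gamma_mult_no_constant:
  assumes "Poly_Mapping.lookup g 0 = 0"
  shows "gamma m (c * g) = Poly_Mapping.single 0 (Poly_Mapping.lookup c 0) * gamma m g"
proof -
  have "gamma m (c * g) = gamma m (Poly_Mapping.single 0 (Poly_Mapping.lookup c 0) * g)"
    by (rule gamma_cong) (simp add: lin_coeff_mult lin_coeff_const assms)
  then show ?thesis
    by (simp add: gamma_smult)
qed

lemma gamma_binomial: "gamma m (zvar S * zvar T - zvar U * zvar V) = 0"
  using gamma_cong[of "zvar S * zvar T - zvar U * zvar V" 0 m]
  by (simp add: lin_coeff_diff lin_coeff_zvar_mult_zvar lin_coeff_zero gamma_zero)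

lemma gamma_f_circ:
  "gamma m (f_circ C \<alpha> A') = (\<Sum>i\<in>C. Poly_Mapping.single 0 (\<alpha> i) * row_prod m (insert i A'))"
  unfolding f_circ_def gamma_sum gamma_smult gamma_zvar ..

lemma pvars_zero: "0 \<in> pvars E"
  unfolding pvars_def by simp

lemma pvars_const: "Poly_Mapping.single 0 a \<in> pvars E"
  unfolding pvars_def by simp

lemma pvars_one: "1 \<in> pvars E"
  unfolding pvars_def by simp

lemma pvars_zvar: "S \<subseteq> E \<Longrightarrow> zvar S \<in> pvars E"
  unfolding pvars_def zvar_def by simp

lemma pvars_add: "p \<in> pvars E \<Longrightarrow> q \<in> pvars E \<Longrightarrow> p + q \<in> pvars E"
  unfolding pvars_def using keys_add[of p q] by blast

lemma pvars_mult:
  assumes "p \<in> pvars E" "q \<in> pvars E"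
  shows "p * q \<in> pvars E"
  unfolding pvars_def
proof (intro CollectI ballI)
  fix \<mu> S
  assume "\<mu> \<in> Poly_Mapping.keys (p * q)" and S: "S \<in> Poly_Mapping.keys \<mu>"
  then obtain a b where "\<mu> = a + b" "a \<in> Poly_Mapping.keys p" "b \<in> Poly_Mapping.keys q"
    using keys_mult[of p q] by blast
  with S keys_add[of a b] assms show "S \<subseteq> E"
    unfolding pvars_def by blast
qed

locale poly_ideal =
  fixes E :: "'e set" and I :: "'e zpoly set"
  assumes zero_mem: "0 \<in> I"
    and add_mem: "p \<in> I \<Longrightarrow> q \<in> I \<Longrightarrow> p + q \<in> I"
    and mult_mem: "p \<in> I \<Longrightarrow> r \<in> pvars E \<Longrightarrow> r * p \<in> I"
begin

lemma smult_mem: "p \<in> I \<Longrightarrow> Poly_Mapping.single 0 a * p \<in> I"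
  by (rule mult_mem[OF _ pvars_const])

lemma diff_mem: "p \<in> I \<Longrightarrow> q \<in> I \<Longrightarrow> p - q \<in> I"
  using add_mem[of p "Poly_Mapping.single 0 (-1) * q"] smult_mem[of q "-1"]
  by (simp add: single_uminus)

lemma sum_mem: "(\<And>i. i \<in> A \<Longrightarrow> f i \<in> I) \<Longrightarrow> (\<Sum>i\<in>A. f i) \<in> I"
  by (induction A rule: infinite_finite_induct) (simp_all add: zero_mem add_mem)

lemma mult_cong_mem:
  assumes "p - g * u \<in> I" "u * v - w \<in> I" "v \<in> pvars E" "g \<in> pvars E"
  shows "p * v - g * w \<in> I"
proof -
  have "p * v - g * w = v * (p - g * u) + g * (u * v - w)"
    by (simp add: algebra_simps)
  then show ?thesis
    using assms by (simp add: add_mem mult_mem)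
qed

end

lemma gen_ideal_generator: "g \<in> G \<Longrightarrow> g \<in> gen_ideal E G"
  unfolding gen_ideal_def
  by (intro CollectI exI[of _ "{g}"] exI[of _ "\<lambda>_. 1"]) (simp add: pvars_one)

lemma poly_ideal_gen_ideal: "poly_ideal E (gen_ideal E G)"
proof
  show "0 \<in> gen_ideal E G"
    unfolding gen_ideal_def by (intro CollectI exI[of _ "{}"]) simp
next
  fix p r
  assume "p \<in> gen_ideal E G" "r \<in> pvars E"
  then obtain F c where "finite F" "F \<subseteq> G" "\<forall>g\<in>F. c g \<in> pvars E" "p = (\<Sum>g\<in>F. c g * g)"
    unfolding gen_ideal_def by blast
  moreover have "r * (\<Sum>g\<in>F. c g * g) = (\<Sum>g\<in>F. (r * c g) * g)"
    by (simp add: sum_distrib_left mult.assoc)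
  ultimately show "r * p \<in> gen_ideal E G"
    unfolding gen_ideal_def using \<open>r \<in> pvars E\<close>
    by (intro CollectI exI[of _ F] exI[of _ "\<lambda>g. r * c g"]) (auto intro: pvars_mult)
next
  fix p q
  assume "p \<in> gen_ideal E G" "q \<in> gen_ideal E G"
  then obtain F1 c1 F2 c2 where
    F1: "finite F1" "F1 \<subseteq> G" "\<forall>g\<in>F1. c1 g \<in> pvars E" "p = (\<Sum>g\<in>F1. c1 g * g)" and
    F2: "finite F2" "F2 \<subseteq> G" "\<forall>g\<in>F2. c2 g \<in> pvars E" "q = (\<Sum>g\<in>F2. c2 g * g)"
    unfolding gen_ideal_def by blast
  define c where "c g = (if g \<in> F1 then c1 g else 0) + (if g \<in> F2 then c2 g else 0)" for g
  have extend: "(\<Sum>g\<in>F. d g * g) = (\<Sum>g\<in>F1 \<union> F2. (if g \<in> F then d g else 0) * g)"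
    if "F \<subseteq> F1 \<union> F2" for F d
    by (rule sum.mono_neutral_cong_left) (use F1 F2 that in auto)
  have "p = (\<Sum>g\<in>F1 \<union> F2. (if g \<in> F1 then c1 g else 0) * g)"
    "q = (\<Sum>g\<in>F1 \<union> F2. (if g \<in> F2 then c2 g else 0) * g)"
    unfolding F1(4) F2(4) by (rule extend; blast)+
  then have "p + q = (\<Sum>g\<in>F1 \<union> F2. c g * g)"
    by (simp add: c_def sum.distrib distrib_right)
  moreover have "\<forall>g\<in>F1 \<union> F2. c g \<in> pvars E"
    using F1(3) F2(3) unfolding c_def by (auto intro!: pvars_add pvars_zero)
  ultimately show "p + q \<in> gen_ideal E G"
    unfolding gen_ideal_def using F1(1,2) F2(1,2)
    by (intro CollectI exI[of _ "F1 \<union> F2"] exI[of _ c]) auto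
qed

interpretation SE_ideal: poly_ideal E "SE_ideal E L" for E L
  unfolding SE_ideal_def by (rule poly_ideal_gen_ideal)

lemma SE_ideal_binomial:
  "S \<subseteq> E \<Longrightarrow> T \<subseteq> E \<Longrightarrow> zvar S * zvar T - zvar (S \<union> T) * zvar (S \<inter> T) \<in> SE_ideal E L"
  unfolding SE_ideal_def by (rule gen_ideal_generator) (auto simp: SE_gens_def)

lemma SE_ideal_f_circ:
  "is_circuit E L C \<Longrightarrow> col_dep L C \<alpha> \<Longrightarrow> A' \<subseteq> E - C \<Longrightarrow> f_circ C \<alpha> A' \<in> SE_ideal E L"
  unfolding SE_ideal_def by (rule gen_ideal_generator) (auto simp: SE_gens_def)

section \<open>Straightening products of variables\<close>

lemma SE_ideal_exchange:
  assumes "X \<subseteq> E" "Y \<subseteq> E" "J \<subseteq> E" "J \<inter> X = {}"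
  shows "zvar (X \<union> J) * zvar Y - zvar (X \<union> Y) * zvar (X \<inter> Y \<union> J) \<in> SE_ideal E L"
proof -
  define U V where "U = X \<union> Y \<union> J" and "V = X \<inter> Y \<union> J \<inter> Y"
  have eqs: "(X \<union> J) \<union> Y = U" "(X \<union> J) \<inter> Y = V"
    "(X \<union> Y) \<union> (X \<inter> Y \<union> J) = U" "(X \<union> Y) \<inter> (X \<inter> Y \<union> J) = V"
    using assms(4) unfolding U_def V_def by blast+
  have "zvar (X \<union> J) * zvar Y - zvar U * zvar V \<in> SE_ideal E L"
    using SE_ideal_binomial[of "X \<union> J" E Y L] assms unfolding eqs by blast
  moreover have "zvar (X \<union> Y) * zvar (X \<inter> Y \<union> J) - zvar U * zvar V \<in> SE_ideal E L"
    using SE_ideal_binomial[of "X \<union> Y" E "X \<inter> Y \<union> J" L] assms unfolding eqs by blast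
  ultimately have "(zvar (X \<union> J) * zvar Y - zvar U * zvar V)
      - (zvar (X \<union> Y) * zvar (X \<inter> Y \<union> J) - zvar U * zvar V) \<in> SE_ideal E L"
    by (rule SE_ideal.diff_mem)
  then show ?thesis
    by simp
qed

fun meet_upto :: "(nat \<Rightarrow> 'e set) \<Rightarrow> nat \<Rightarrow> 'e set" where
  "meet_upto B 0 = B 0"
| "meet_upto B (Suc m) = meet_upto B m \<inter> B (Suc m)"

fun straighten_cofactor :: "(nat \<Rightarrow> 'e set) \<Rightarrow> nat \<Rightarrow> 'e zpoly" where
  "straighten_cofactor B 0 = 1"
| "straighten_cofactor B (Suc m) = straighten_cofactor B m * zvar (meet_upto B m \<union> B (Suc m))"

lemma meet_upto_subset: "k \<le> m \<Longrightarrow> meet_upto B m \<subseteq> B k"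
  by (induction m) (auto simp: le_Suc_eq)

lemma straighten_cofactor_pvars:
  "\<forall>k\<le>m. B k \<subseteq> E \<Longrightarrow> straighten_cofactor B m \<in> pvars E"
proof (induction m)
  case (Suc m)
  then have "meet_upto B m \<subseteq> E"
    using meet_upto_subset[of 0 m B] by auto
  with Suc show ?case
    by (auto intro!: pvars_mult pvars_zvar)
qed (simp add: pvars_one)

lemma prod_zvar_straighten:
  assumes "\<forall>k\<le>m. B k \<subseteq> E" "J \<subseteq> E" "s \<le> m" "J \<inter> B s = {}"
  shows "(\<Prod>k<Suc m. zvar (if k = s then B k \<union> J else B k))
      - straighten_cofactor B m * zvar (meet_upto B m \<union> J) \<in> SE_ideal E L"
  using assms
proof (induction m arbitrary: s J)
  case (Suc m)
  let ?W = "meet_upto B m" and ?G = "straighten_cofactor B m" and ?Bm = "B (Suc m)"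
  have sets: "?Bm \<subseteq> E" "?W \<subseteq> E"
    using Suc.prems(1) meet_upto_subset[of 0 m B] by auto
  have G: "?G \<in> pvars E"
    using Suc.prems(1) by (intro straighten_cofactor_pvars) auto
  show ?case
  proof (cases "s \<le> m")
    case True
    have "J \<inter> ?W = {}"
      using Suc.prems(4) meet_upto_subset[OF True, of B] by blast
    then have "zvar (?W \<union> J) * zvar ?Bm - zvar (?W \<union> ?Bm) * zvar (?W \<inter> ?Bm \<union> J) \<in> SE_ideal E L"
      using sets Suc.prems(2) by (intro SE_ideal_exchange) auto
    from SE_ideal.mult_cong_mem[OF Suc.IH[OF _ _ True Suc.prems(4)] this pvars_zvar[OF sets(1)] G]
    show ?thesis
      using Suc.prems True by (simp add: mult.assoc)
  next
    case False
    then have s: "s = Suc m"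
      using Suc.prems(3) by simp
    have "zvar (?Bm \<union> J) * zvar ?W - zvar (?Bm \<union> ?W) * zvar (?Bm \<inter> ?W \<union> J) \<in> SE_ideal E L"
      using sets Suc.prems(2,4) s by (intro SE_ideal_exchange) auto
    then have "zvar ?W * zvar (?Bm \<union> J) - zvar (?W \<union> ?Bm) * zvar (?W \<inter> ?Bm \<union> J) \<in> SE_ideal E L"
      by (simp add: Un_commute Int_commute mult.commute)
    moreover have "(\<Prod>k<Suc m. zvar (if k = 0 then B k \<union> {} else B k)) - ?G * zvar (?W \<union> {})
        \<in> SE_ideal E L"
      using Suc.prems(1) by (intro Suc.IH) auto
    then have "(\<Prod>k<Suc m. zvar (B k)) - ?G * zvar ?W \<in> SE_ideal E L"
      by (simp only: Un_empty_right if_cancel)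
    ultimately have "(\<Prod>k<Suc m. zvar (B k)) * zvar (?Bm \<union> J)
        - ?G * (zvar (?W \<union> ?Bm) * zvar (?W \<inter> ?Bm \<union> J)) \<in> SE_ideal E L"
      using SE_ideal.mult_cong_mem G Suc.prems(2) sets by (blast intro: pvars_zvar)
    then show ?thesis
      using s by (simp add: mult.assoc)
  qed
qed (simp add: SE_ideal.zero_mem)

section \<open>Circuits of the thickening\<close>

lemma col_dep_thicken_iff:
  assumes "D \<subseteq> thick_ground m n"
  shows "col_dep (thicken m n L) D \<alpha> \<longleftrightarrow>
    (\<exists>c\<in>D. \<alpha> c \<noteq> 0) \<and> (\<forall>x\<in>L. (\<Sum>c\<in>D. \<alpha> c * x (snd c)) = 0)"
proof -
  have "(\<Sum>c\<in>D. \<alpha> c * (\<lambda>(i, j). if i < m \<and> j < n then x j else 0) c) = (\<Sum>c\<in>D. \<alpha> c * x (snd c))"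
    for x :: "nat \<Rightarrow> complex"
    by (rule sum.cong) (use assms in \<open>auto simp: thick_ground_def\<close>)
  then show ?thesis
    unfolding col_dep_def thicken_def by auto
qed

lemma col_dep_thicken_iff_projection:
  assumes "C \<subseteq> thick_ground m n" "inj_on snd C" "\<And>c. c \<in> C \<Longrightarrow> \<beta> (snd c) = \<alpha> c"
  shows "col_dep (thicken m n L) C \<alpha> \<longleftrightarrow> col_dep L (snd ` C) \<beta>"
proof -
  have sums: "(\<Sum>j\<in>snd ` C. \<beta> j * x j) = (\<Sum>c\<in>C. \<alpha> c * x (snd c))" for x :: "nat \<Rightarrow> complex"
    using assms(3) by (simp add: sum.reindex[OF assms(2)])
  have nonzero: "(\<exists>c\<in>C. \<beta> (snd c) \<noteq> 0) \<longleftrightarrow> (\<exists>c\<in>C. \<alpha> c \<noteq> 0)"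
    using assms(3) by auto
  show ?thesis
    unfolding col_dep_thicken_iff[OF assms(1)] by (simp add: col_dep_def sums nonzero)
qed

lemma is_circuitD_minimal: "is_circuit E L C \<Longrightarrow> D \<subset> C \<Longrightarrow> \<not> col_dep L D \<gamma>"
  unfolding is_circuit_def by blast

lemma circuit_thicken_repeated_column:
  assumes circ: "is_circuit (thick_ground m n) (thicken m n L) C"
    and dep: "col_dep (thicken m n L) C \<alpha>"
    and c12: "c1 \<in> C" "c2 \<in> C" "c1 \<noteq> c2" "snd c1 = snd c2"
  shows "C = {c1, c2}" and "\<alpha> c1 + \<alpha> c2 = 0"
proof -
  have C: "C \<subseteq> thick_ground m n"
    using circ unfolding is_circuit_def by blast
  then have pair: "{c1, c2} \<subseteq> thick_ground m n" and single: "{c1} \<subseteq> thick_ground m n"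
    using c12 by auto
  have "col_dep (thicken m n L) {c1, c2} (\<lambda>c. if c = c1 then 1 else -1)"
    unfolding col_dep_thicken_iff[OF pair] using c12 by auto
  moreover have "{c1, c2} \<subseteq> C"
    using c12 by blast
  ultimately show C12: "C = {c1, c2}"
    using is_circuitD_minimal[OF circ] by (metis psubsetI)
  have "{c1} \<subset> C"
    using C12 c12 by auto
  then have "\<not> col_dep (thicken m n L) {c1} (\<lambda>_. 1)"
    by (rule is_circuitD_minimal[OF circ])
  then obtain x where x: "x \<in> L" "x (snd c1) \<noteq> 0"
    unfolding col_dep_thicken_iff[OF single] by auto
  have "(\<alpha> c1 + \<alpha> c2) * x (snd c1) = (\<Sum>c\<in>C. \<alpha> c * x (snd c))"
    using C12 c12 by (simp add: distrib_right)
  also have "\<dots> = 0"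
    using dep x(1) unfolding col_dep_thicken_iff[OF C] by blast
  finally show "\<alpha> c1 + \<alpha> c2 = 0"
    using x(2) by simp
qed

lemma circuit_thicken_projection:
  assumes circ: "is_circuit (thick_ground m n) (thicken m n L) C"
    and dep: "col_dep (thicken m n L) C \<alpha>"
    and inj: "inj_on snd C"
    and \<beta>: "\<And>c. c \<in> C \<Longrightarrow> \<beta> (snd c) = \<alpha> c"
  shows "is_circuit {0..<n} L (snd ` C)" and "col_dep L (snd ` C) \<beta>"
proof -
  have C: "C \<subseteq> thick_ground m n"
    using circ unfolding is_circuit_def by blast
  show dep': "col_dep L (snd ` C) \<beta>"
    using dep col_dep_thicken_iff_projection[where C = C and \<beta> = \<beta> and \<alpha> = \<alpha> and L = L] C inj \<beta>
    by blast
  have "\<not> col_dep L D \<gamma>" if D: "D \<subset> snd ` C" for D \<gamma>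
  proof
    assume dep_D: "col_dep L D \<gamma>"
    define C' where "C' = {c \<in> C. snd c \<in> D}"
    have "C' \<subset> C" "snd ` C' = D"
      using D unfolding C'_def by blast+
    moreover have "inj_on snd C'"
      using inj unfolding C'_def by (rule inj_on_subset) blast
    ultimately have "col_dep (thicken m n L) C' (\<lambda>c. \<gamma> (snd c))"
      using col_dep_thicken_iff_projection[of C' m n \<gamma> "\<lambda>c. \<gamma> (snd c)" L] C dep_D by auto
    with is_circuitD_minimal[OF circ \<open>C' \<subset> C\<close>] show False
      by blast
  qed
  moreover have "snd ` C \<subseteq> {0..<n}"
    using C unfolding thick_ground_def by auto
  ultimately show "is_circuit {0..<n} L (snd ` C)"
    unfolding is_circuit_def using dep' by blast
qed

section \<open>The image of the ideal\<close>

lemma row_of_insert: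
  "row_of (insert c A) k = (if k = fst c then row_of A k \<union> {snd c} else row_of A k)"
  unfolding row_of_def by (cases c) auto

lemma circuit_form_projection_mem:
  assumes circ: "is_circuit (thick_ground m n) (thicken m n L) C"
    and dep: "col_dep (thicken m n L) C \<alpha>"
    and W: "W \<subseteq> {0..<n}" "W \<inter> snd ` C = {}"
  shows "(\<Sum>c\<in>C. Poly_Mapping.single 0 (\<alpha> c) * zvar (W \<union> {snd c})) \<in> SE_ideal {0..<n} L"
proof (cases "inj_on snd C")
  case True
  define \<beta> where "\<beta> j = \<alpha> (the_inv_into C snd j)" for j
  have \<beta>: "\<beta> (snd c) = \<alpha> c" if "c \<in> C" for c
    unfolding \<beta>_def using the_inv_into_f_f[OF True that] by simp
  have "(\<Sum>c\<in>C. Poly_Mapping.single 0 (\<alpha> c) * zvar (W \<union> {snd c})) = f_circ (snd ` C) \<beta> W"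
    unfolding f_circ_def sum.reindex[OF True] by (rule sum.cong) (simp_all add: \<beta>)
  also have "\<dots> \<in> SE_ideal {0..<n} L"
    using circuit_thicken_projection[OF circ dep True \<beta>] W by (intro SE_ideal_f_circ) auto
  finally show ?thesis .
next
  case False
  then obtain c1 c2 where c12: "c1 \<in> C" "c2 \<in> C" "c1 \<noteq> c2" "snd c1 = snd c2"
    unfolding inj_on_def by blast
  then have "(\<Sum>c\<in>C. Poly_Mapping.single 0 (\<alpha> c) * zvar (W \<union> {snd c})) =
      Poly_Mapping.single 0 (\<alpha> c1 + \<alpha> c2) * zvar (W \<union> {snd c1})"
    using circuit_thicken_repeated_column(1)[OF circ dep c12] by (simp add: single_add distrib_right)
  then show ?thesis
    using circuit_thicken_repeated_column(2)[OF circ dep c12] by (simp add: SE_ideal.zero_mem)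
qed

lemma gamma_f_circ_thicken_mem:
  assumes circ: "is_circuit (thick_ground m n) (thicken m n L) C"
    and dep: "col_dep (thicken m n L) C \<alpha>"
    and A': "A' \<subseteq> thick_ground m n - C"
    and m: "m = Suc m'"
  shows "gamma m (f_circ C \<alpha> A') \<in> SE_ideal {0..<n} L"
proof -
  define B where "B = row_of A'"
  let ?W = "meet_upto B m'" and ?G = "straighten_cofactor B m'"
  have C: "C \<subseteq> thick_ground m n"
    using circ unfolding is_circuit_def by blast
  have B: "\<forall>k\<le>m'. B k \<subseteq> {0..<n}"
    using A' m unfolding B_def row_of_def thick_ground_def by auto
  have c: "fst c \<le> m'" "snd c < n" "snd c \<notin> B (fst c)" if "c \<in> C" for c
    using that C A' m unfolding thick_ground_def B_def row_of_def by (cases c; auto)+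
  have straighten: "row_prod m (insert c A') - ?G * zvar (?W \<union> {snd c}) \<in> SE_ideal {0..<n} L"
    if "c \<in> C" for c
  proof -
    have "row_prod m (insert c A') = (\<Prod>k<Suc m'. zvar (if k = fst c then B k \<union> {snd c} else B k))"
      unfolding row_prod_def m B_def row_of_insert ..
    moreover have "(\<Prod>k<Suc m'. zvar (if k = fst c then B k \<union> {snd c} else B k))
        - ?G * zvar (?W \<union> {snd c}) \<in> SE_ideal {0..<n} L"
      using c[OF that] by (intro prod_zvar_straighten[OF B]) auto
    ultimately show ?thesis
      by simp
  qed
  define H where "H = (\<Sum>c\<in>C. Poly_Mapping.single 0 (\<alpha> c) * zvar (?W \<union> {snd c}))"
  have "gamma m (f_circ C \<alpha> A') - ?G * H =
      (\<Sum>c\<in>C. Poly_Mapping.single 0 (\<alpha> c) * (row_prod m (insert c A') - ?G * zvar (?W \<union> {snd c})))"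
    unfolding gamma_f_circ H_def by (simp add: sum_distrib_left sum_subtractf algebra_simps)
  also have "\<dots> \<in> SE_ideal {0..<n} L"
    using straighten by (intro SE_ideal.sum_mem SE_ideal.smult_mem)
  finally have "gamma m (f_circ C \<alpha> A') - ?G * H \<in> SE_ideal {0..<n} L" .
  moreover have "?G * H \<in> SE_ideal {0..<n} L"
  proof -
    have "snd c \<notin> ?W" if "c \<in> C" for c
      using c[OF that] meet_upto_subset[OF c(1)[OF that], of B] by blast
    then have "?W \<inter> snd ` C = {}"
      by blast
    moreover have "?W \<subseteq> {0..<n}"
      using B meet_upto_subset[of 0 m' B] by auto
    ultimately show ?thesis
      unfolding H_def using straighten_cofactor_pvars[OF B]
      by (intro SE_ideal.mult_mem circuit_form_projection_mem[OF circ dep])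
  qed
  ultimately have "(gamma m (f_circ C \<alpha> A') - ?G * H) + ?G * H \<in> SE_ideal {0..<n} L"
    by (rule SE_ideal.add_mem)
  then show ?thesis
    by simp
qed

lemma gamma_SE_ideal_thicken:
  assumes "q \<in> SE_ideal (thick_ground m n) (thicken m n L)" and "m \<ge> 1"
  shows "gamma m q \<in> SE_ideal {0..<n} L"
proof -
  obtain m' where m: "m = Suc m'"
    using assms(2) by (cases m) auto
  obtain F c where F: "F \<subseteq> SE_gens (thick_ground m n) (thicken m n L)" "q = (\<Sum>g\<in>F. c g * g)"
    using assms(1) unfolding SE_ideal_def gen_ideal_def by blast
  have gen: "gamma m g \<in> SE_ideal {0..<n} L" if "g \<in> SE_gens (thick_ground m n) (thicken m n L)" for g
  proof -
    from that consider (binomial) S T where "g = zvar S * zvar T - zvar (S \<union> T) * zvar (S \<inter> T)"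
      | (circuit) C \<alpha> A' where "g = f_circ C \<alpha> A'" "is_circuit (thick_ground m n) (thicken m n L) C"
          "col_dep (thicken m n L) C \<alpha>" "A' \<subseteq> thick_ground m n - C"
      unfolding SE_gens_def by blast
    then show ?thesis
      by cases (simp_all add: gamma_binomial SE_ideal.zero_mem gamma_f_circ_thicken_mem m)
  qed
  have "gamma m (c g * g) \<in> SE_ideal {0..<n} L" if "g \<in> F" for g
  proof -
    have g: "g \<in> SE_gens (thick_ground m n) (thicken m n L)"
      using that F(1) by blast
    then have "gamma m (c g * g) = Poly_Mapping.single 0 (Poly_Mapping.lookup (c g) 0) * gamma m g"
      by (intro gamma_mult_no_constant SE_gens_lookup_zero)
    with gen[OF g] show ?thesis
      by (simp add: SE_ideal.smult_mem)
  qed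
  then show ?thesis
    unfolding F(2) gamma_sum by (rule SE_ideal.sum_mem)
qed

section \<open>Surjectivity\<close>

lemma hom_polys_zero: "0 \<in> hom_polys E k"
  unfolding hom_polys_def pvars_def by simp

lemma hom_polys_add: "p \<in> hom_polys E k \<Longrightarrow> q \<in> hom_polys E k \<Longrightarrow> p + q \<in> hom_polys E k"
  unfolding hom_polys_def pvars_def using keys_add[of p q] by blast

lemma hom_polys_sum: "(\<And>i. i \<in> A \<Longrightarrow> f i \<in> hom_polys E k) \<Longrightarrow> (\<Sum>i\<in>A. f i) \<in> hom_polys E k"
  by (induction A rule: infinite_finite_induct) (simp_all add: hom_polys_zero hom_polys_add)

lemma hom_polys_smult:
  assumes "p \<in> hom_polys E k"
  shows "Poly_Mapping.single 0 a * p \<in> hom_polys E k"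
proof -
  have "Poly_Mapping.keys (Poly_Mapping.single 0 a * p) \<subseteq> Poly_Mapping.keys p"
    using keys_mult[of "Poly_Mapping.single 0 a" p] by (auto split: if_splits)
  with assms show ?thesis
    unfolding hom_polys_def pvars_def by blast
qed

lemma zvar_hom_polys: "S \<subseteq> E \<Longrightarrow> zvar S \<in> hom_polys E 1"
  unfolding hom_polys_def pvars_def zvar_def by simp

lemma poly_mapping_sum_single_lookup: "(\<Sum>\<mu>\<in>Poly_Mapping.keys p. Poly_Mapping.single \<mu> (Poly_Mapping.lookup p \<mu>)) = p"
  by (rule poly_mapping_eqI) (simp add: lookup_sum lookup_single when_def in_keys_iff)

lemma monomial_eq_prod_zvar:
  fixes \<mu> :: "'e set \<Rightarrow>\<^sub>0 nat"
  assumes "(\<Sum>S\<in>Poly_Mapping.keys \<mu>. Poly_Mapping.lookup \<mu> S) = m"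
  shows "\<exists>B. (\<forall>k<m. B k \<in> Poly_Mapping.keys \<mu>) \<and> (\<Prod>k<m. zvar (B k)) = Poly_Mapping.single \<mu> 1"
  using assms
proof (induction m arbitrary: \<mu>)
  case 0
  then have "\<mu> = 0"
    by (auto simp: in_keys_iff intro: poly_mapping_eqI)
  then show ?case
    by simp
next
  case (Suc m)
  then obtain S where S: "S \<in> Poly_Mapping.keys \<mu>"
    by fastforce
  define \<mu>' where "\<mu>' = \<mu> - Poly_Mapping.single S 1"
  have \<mu>: "\<mu> = \<mu>' + Poly_Mapping.single S 1"
    using S unfolding \<mu>'_def
    by (intro poly_mapping_eqI) (auto simp: lookup_add lookup_minus lookup_single when_def in_keys_iff)
  have keys: "Poly_Mapping.keys \<mu>' \<subseteq> Poly_Mapping.keys \<mu>"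
    unfolding \<mu>'_def by (auto simp: lookup_minus in_keys_iff)
  have "(\<Sum>T\<in>Poly_Mapping.keys \<mu>. Poly_Mapping.lookup \<mu> T)
      = (\<Sum>T\<in>Poly_Mapping.keys \<mu>'. Poly_Mapping.lookup \<mu>' T) + 1"
    using setsum_keys_plus_distrib[of "\<lambda>_ x. x" \<mu>' "Poly_Mapping.single S 1"] by (simp flip: \<mu>)
  then obtain B where B: "\<forall>k<m. B k \<in> Poly_Mapping.keys \<mu>'" "(\<Prod>k<m. zvar (B k)) = Poly_Mapping.single \<mu>' 1"
    using Suc by auto
  have "(\<Prod>k<Suc m. zvar ((B(m := S)) k)) = Poly_Mapping.single \<mu> 1"
    using B(2) by (simp add: \<mu> zvar_def mult_single)
  moreover have "\<forall>k<Suc m. (B(m := S)) k \<in> Poly_Mapping.keys \<mu>"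
    using B(1) keys S by (auto simp: less_Suc_eq)
  ultimately show ?case
    by blast
qed

definition stack_rows :: "nat \<Rightarrow> (nat \<Rightarrow> nat set) \<Rightarrow> (nat \<times> nat) set" where
  "stack_rows m B = {(k, j). k < m \<and> j \<in> B k}"

lemma row_prod_stack_rows: "row_prod m (stack_rows m B) = (\<Prod>k<m. zvar (B k))"
  unfolding row_prod_def by (rule prod.cong) (auto simp: row_of_def stack_rows_def)

lemma gamma_surjective:
  assumes p: "p \<in> hom_polys {0..<n} m"
  shows "\<exists>q \<in> hom_polys (thick_ground m n) 1. gamma m q = p"
proof -
  have "\<exists>B. (\<forall>k<m. B k \<in> Poly_Mapping.keys \<mu>) \<and> (\<Prod>k<m. zvar (B k)) = Poly_Mapping.single \<mu> 1"
    if "\<mu> \<in> Poly_Mapping.keys p" for \<mu>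
    using p that unfolding hom_polys_def by (intro monomial_eq_prod_zvar) blast
  then have "\<forall>\<mu>\<in>Poly_Mapping.keys p. \<exists>B. (\<forall>k<m. B k \<in> Poly_Mapping.keys \<mu>)
      \<and> (\<Prod>k<m. zvar (B k)) = Poly_Mapping.single \<mu> 1"
    by blast
  then obtain B where B: "\<forall>\<mu>\<in>Poly_Mapping.keys p. (\<forall>k<m. B \<mu> k \<in> Poly_Mapping.keys \<mu>)
      \<and> (\<Prod>k<m. zvar (B \<mu> k)) = Poly_Mapping.single \<mu> 1"
    by (rule exE[OF bchoice])
  define q where "q = (\<Sum>\<mu>\<in>Poly_Mapping.keys p.
      Poly_Mapping.single 0 (Poly_Mapping.lookup p \<mu>) * zvar (stack_rows m (B \<mu>)))"
  have "B \<mu> k \<subseteq> {0..<n}" if "\<mu> \<in> Poly_Mapping.keys p" "k < m" for \<mu> k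
    using p B that unfolding hom_polys_def pvars_def by blast
  then have "stack_rows m (B \<mu>) \<subseteq> thick_ground m n" if "\<mu> \<in> Poly_Mapping.keys p" for \<mu>
    using that unfolding stack_rows_def thick_ground_def by auto
  then have "q \<in> hom_polys (thick_ground m n) 1"
    unfolding q_def by (intro hom_polys_sum hom_polys_smult zvar_hom_polys)
  moreover have "gamma m q = p"
  proof -
    have "gamma m q = (\<Sum>\<mu>\<in>Poly_Mapping.keys p.
        Poly_Mapping.single 0 (Poly_Mapping.lookup p \<mu>) * Poly_Mapping.single \<mu> 1)"
      unfolding q_def gamma_sum gamma_smult gamma_zvar row_prod_stack_rows
      by (rule sum.cong) (simp_all add: B)
    also have "\<dots> = p"
      by (simp add: mult_single poly_mapping_sum_single_lookup)
    finally show ?thesis .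
  qed
  ultimately show ?thesis
    by blast
qed

theorem lemma5p17:
  fixes L :: "(nat \<Rightarrow> complex) set" and n m :: nat
  assumes "is_csubspace {0..<n} L" and "m \<ge> 1"
  shows "(\<forall>q \<in> hom_polys (thick_ground m n) 1.
            q \<in> SE_ideal (thick_ground m n) (thicken m n L) \<longrightarrow> gamma m q \<in> SE_ideal {0..<n} L)
       \<and> (\<forall>p \<in> hom_polys {0..<n} m. \<exists>q \<in> hom_polys (thick_ground m n) 1.
            p - gamma m q \<in> SE_ideal {0..<n} L)"
proof (intro conjI ballI impI)
  fix q
  assume "q \<in> SE_ideal (thick_ground m n) (thicken m n L)"
  then show "gamma m q \<in> SE_ideal {0..<n} L"
    using assms(2) by (rule gamma_SE_ideal_thicken)
next
  fix p
  assume "p \<in> hom_polys {0..<n} m"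
  then obtain q where q: "q \<in> hom_polys (thick_ground m n) 1" "gamma m q = p"
    using gamma_surjective by blast
  have "p - gamma m q \<in> SE_ideal {0..<n} L"
    using q(2) SE_ideal.zero_mem by simp
  with q(1) show "\<exists>q \<in> hom_polys (thick_ground m n) 1. p - gamma m q \<in> SE_ideal {0..<n} L"
    by blast
qed

end
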